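(* For all integers $n\geq 0$ and $i\geq 1$, \begin{align*} \bar a_{2i}(4n+3)&\equiv 0 \pmod 4, & \bar a_{2i}(8n+6)&\equiv 0 \pmod 4,\\ \bar a_{2i}(8n+5)&\equiv 0 \pmod 4, & \bar a_{2i}(8n+7)&\equiv 0 \pmod 8. \end{align*}
   Context: For an integer $k\geq 1$ let $f_k:=\prod_{n\geq 1}(1-q^{kn})$. For an integer $c\geq1$, the generalized overcubic partition function $\bar a_c(n)$ is defined by the generating function $\sum_{n\geq 0}\bar a_c(n)q^n=\dfrac{f_4^{c-1}}{f_1^2f_2^{2c-3}}$. *)

theory Defs
  imports "HOL-Computational_Algebra.Formal_Power_Series" "HOL-Number_Theory.Cong"
begin

text \<open>f_k = prod_{n>=1} (1 - q^(k n)) as a formal power series over int.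
  For k >= 1 the m-th coefficient of the infinite product equals the m-th
  coefficient of the finite product over n = 1..m.\<close>
definition euler_fps :: "nat \<Rightarrow> int fps" where
  "euler_fps k = Abs_fps (\<lambda>m. fps_nth (\<Prod>j\<in>{1..m}. (1 - fps_X ^ (k * j) :: int fps)) m)"

text \<open>Generating function f_4^(c-1) / (f_1^2 f_2^(2c-3)); all f_k have constant
  term 1, so the inverse is the (two-sided) inverse with constant term 1.
  For c = 1 the exponent 2c-3 = -1, i.e. the factor f_2 moves to the numerator.\<close>
definition overcubic_gf :: "nat \<Rightarrow> int fps" where
  "overcubic_gf c =
     (if c = 1 then euler_fps 2 * fps_right_inverse (euler_fps 1 ^ 2) 1
      else euler_fps 4 ^ (c - 1) *
           fps_right_inverse (euler_fps 1 ^ 2 * euler_fps 2 ^ (2 * c - 3)) 1)"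

definition abar :: "nat \<Rightarrow> nat \<Rightarrow> int" where
  "abar c n = fps_nth (overcubic_gf c) n"

end

theory Submission
  imports Defs
begin

text \<open>
  Write T_k = sum_{s>=1} (-1)^s q^(k s^2), which is theta_tail k. Gauss's identity
  f_k^2 = f_{2k} (1 + 2 T_k) follows from a finite form of Jacobi's triple product:
  (x;x)_{2n}^2 = (x;x^2)_n^2 (x^2;x^2)_n^2 expands as
  sum_j (-1)^(j+n) x^((j-n)^2) [2n choose j]_{x^2} (x^2;x^2)_n^2, and for j close to n the
  Gaussian binomial times (x^2;x^2)_n^2 agrees with (x^2;x^2)_n, hence with f_{2k}, to high order.

  Hence the generating function of abar_(2i) is the inverse of (1 + 2 T_1)(1 + 2 T_2)^m with
  m = 2i - 1. As (1 + 2y)(1 - 2y + 4y^2) = 1 + 8y^3, modulo 8 it equals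
  1 - 2 T_1 - 2m T_2 + 4 (T_1^2 + m T_1 T_2 + C(m+1,2) T_2^2).
  T_1 is supported on squares, which are 0, 1 or 4 mod 8, and T_2 on twice the squares, which are
  0 or 2 mod 8. So T_1 and T_2 vanish at exponents that are 3, 5, 6 or 7 mod 8, and the quadratic
  terms vanish at exponents that are 7 mod 8.
\<close>

unbundle fps_syntax

definition q_pochhammer :: "'a::comm_ring_1 \<Rightarrow> nat \<Rightarrow> 'a" where
  "q_pochhammer q n = (\<Prod>i=1..n. 1 - q ^ i)"

lemma q_pochhammer_0 [simp]: "q_pochhammer q 0 = 1"
  by (simp add: q_pochhammer_def)

lemma q_pochhammer_Suc: "q_pochhammer q (Suc n) = q_pochhammer q n * (1 - q ^ Suc n)"
  by (simp add: q_pochhammer_def prod.nat_ivl_Suc')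

fun q_binomial :: "'a::comm_ring_1 \<Rightarrow> nat \<Rightarrow> nat \<Rightarrow> 'a" where
  "q_binomial q 0 j = (if j = 0 then 1 else 0)"
| "q_binomial q (Suc n) 0 = 1"
| "q_binomial q (Suc n) (Suc j) = q_binomial q n j + q ^ Suc j * q_binomial q n (Suc j)"

lemma q_binomial_0_right [simp]: "q_binomial q n 0 = 1"
  by (cases n) auto

lemma q_binomial_eq_0: "n < j \<Longrightarrow> q_binomial q n j = 0"
  by (induction q n j rule: q_binomial.induct) auto

lemma q_binomial_Suc:
  "q_binomial q (Suc n) j = (if j = 0 then 0 else q_binomial q n (j - 1)) + q ^ j * q_binomial q n j"
  by (cases j) auto

lemma q_binomial_mult_q_pochhammer:
  "j \<le> n \<Longrightarrow> q_binomial q n j * q_pochhammer q j * q_pochhammer q (n - j) = q_pochhammer q n"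
proof (induction n arbitrary: j)
  case (Suc n)
  show ?case
  proof (cases j)
    case (Suc i)
    with Suc.prems have "i \<le> n" by simp
    have "q_binomial q n i * q_pochhammer q (Suc i) * q_pochhammer q (n - i)
        = (q_binomial q n i * q_pochhammer q i * q_pochhammer q (n - i)) * (1 - q ^ Suc i)"
      by (simp add: q_pochhammer_Suc mult_ac)
    also have "\<dots> = q_pochhammer q n * (1 - q ^ Suc i)"
      using Suc.IH[OF \<open>i \<le> n\<close>] by simp
    finally have left: "q_binomial q n i * q_pochhammer q (Suc i) * q_pochhammer q (n - i)
        = q_pochhammer q n * (1 - q ^ Suc i)" .
    have right: "q ^ Suc i * q_binomial q n (Suc i) * q_pochhammer q (Suc i) * q_pochhammer q (n - i)
        = q ^ Suc i * q_pochhammer q n * (1 - q ^ (n - i))"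
    proof (cases "i = n")
      case False
      with \<open>i \<le> n\<close> have "Suc i \<le> n" by simp
      then have "q_pochhammer q (n - i) = q_pochhammer q (n - Suc i) * (1 - q ^ (n - i))"
        using q_pochhammer_Suc[of q "n - Suc i"] by (simp add: Suc_diff_Suc)
      then have "q ^ Suc i * q_binomial q n (Suc i) * q_pochhammer q (Suc i) * q_pochhammer q (n - i)
          = q ^ Suc i * (q_binomial q n (Suc i) * q_pochhammer q (Suc i) * q_pochhammer q (n - Suc i))
            * (1 - q ^ (n - i))"
        by (simp only: mult_ac)
      then show ?thesis
        using Suc.IH[OF \<open>Suc i \<le> n\<close>] by simp
    qed (simp add: q_binomial_eq_0)
    have "q_binomial q (Suc n) j * q_pochhammer q j * q_pochhammer q (Suc n - j)
        = q_binomial q n i * q_pochhammer q (Suc i) * q_pochhammer q (n - i)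
          + q ^ Suc i * q_binomial q n (Suc i) * q_pochhammer q (Suc i) * q_pochhammer q (n - i)"
      by (simp add: \<open>j = Suc i\<close> distrib_right)
    also have "\<dots> = q_pochhammer q n * (1 - q ^ Suc i * q ^ (n - i))"
      unfolding left right by (simp add: algebra_simps)
    also have "q ^ Suc i * q ^ (n - i) = q ^ Suc n"
      using \<open>i \<le> n\<close> by (simp flip: power_add power_Suc)
    finally show ?thesis
      by (simp add: q_pochhammer_Suc)
  qed simp
qed simp

definition odd_q_pochhammer :: "'a::comm_ring_1 \<Rightarrow> nat \<Rightarrow> 'a" where
  "odd_q_pochhammer x n = (\<Prod>i<n. 1 - x ^ (2 * i + 1))"

lemma odd_q_pochhammer_Suc:
  "odd_q_pochhammer x (Suc n) = odd_q_pochhammer x n * (1 - x ^ (2 * n + 1))"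
  by (simp add: odd_q_pochhammer_def)

lemma odd_q_pochhammer_mult_q_pochhammer:
  "odd_q_pochhammer x n * q_pochhammer (x\<^sup>2) n = q_pochhammer x (2 * n)"
proof (induction n)
  case (Suc n)
  have "q_pochhammer x (2 * Suc n) = q_pochhammer x (2 * n) * (1 - x ^ (2 * n + 1)) * (1 - x ^ (2 * n + 2))"
    by (simp add: q_pochhammer_Suc)
  moreover have "(x\<^sup>2) ^ Suc n = x ^ (2 * n + 2)"
    unfolding power_mult[symmetric] by simp
  then have "q_pochhammer (x\<^sup>2) (Suc n) = q_pochhammer (x\<^sup>2) n * (1 - x ^ (2 * n + 2))"
    by (simp add: q_pochhammer_Suc)
  ultimately show ?case
    by (simp add: odd_q_pochhammer_Suc flip: Suc.IH)
qed (simp add: odd_q_pochhammer_def)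

text \<open>Cauchy's q-binomial theorem for q = x^2, in which q^(j(j-1)/2) becomes x^(j(j-1)).\<close>
lemma q_binomial_theorem:
  "(\<Prod>i<n. 1 + z * x ^ (2 * i)) = (\<Sum>j\<le>n. x ^ (j * (j - 1)) * q_binomial (x\<^sup>2) n j * z ^ j)"
proof (induction n arbitrary: z)
  case (Suc n)
  have "(\<Prod>i<Suc n. 1 + z * x ^ (2 * i)) = (1 + z) * (\<Prod>i<n. 1 + (z * x\<^sup>2) * x ^ (2 * i))"
    by (subst prod.lessThan_Suc_shift) (simp add: power2_eq_square mult.assoc)
  also have "\<dots> = (1 + z) * (\<Sum>j\<le>n. x ^ (j * (j - 1)) * q_binomial (x\<^sup>2) n j * (z * x\<^sup>2) ^ j)"
    by (simp only: Suc.IH)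
  finally have prod: "(\<Prod>i<Suc n. 1 + z * x ^ (2 * i))
      = (1 + z) * (\<Sum>j\<le>n. x ^ (j * (j - 1)) * q_binomial (x\<^sup>2) n j * (z * x\<^sup>2) ^ j)" .
  have shifted: "(\<Sum>j\<le>Suc n. x ^ (j * (j - 1)) * (if j = 0 then 0 else q_binomial (x\<^sup>2) n (j - 1)) * z ^ j)
      = z * (\<Sum>j\<le>n. x ^ (j * (j - 1)) * q_binomial (x\<^sup>2) n j * (z * x\<^sup>2) ^ j)"
  proof -
    have "x ^ (Suc j * j) = x ^ (j * (j - 1)) * (x\<^sup>2) ^ j" for j
    proof -
      have "Suc j * j = j * (j - 1) + 2 * j" by (cases j) auto
      then show ?thesis by (simp only: power_add power_mult)
    qed
    then show ?thesis
      by (subst sum.atMost_Suc_shift) (simp add: sum_distrib_left algebra_simps)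
  qed
  have unshifted: "(\<Sum>j\<le>Suc n. x ^ (j * (j - 1)) * ((x\<^sup>2) ^ j * q_binomial (x\<^sup>2) n j) * z ^ j)
      = (\<Sum>j\<le>n. x ^ (j * (j - 1)) * q_binomial (x\<^sup>2) n j * (z * x\<^sup>2) ^ j)"
    by (simp add: q_binomial_eq_0 algebra_simps)
  have "(\<Sum>j\<le>Suc n. x ^ (j * (j - 1)) * q_binomial (x\<^sup>2) (Suc n) j * z ^ j)
     = (\<Sum>j\<le>Suc n. x ^ (j * (j - 1)) * (if j = 0 then 0 else q_binomial (x\<^sup>2) n (j - 1)) * z ^ j)
     + (\<Sum>j\<le>Suc n. x ^ (j * (j - 1)) * ((x\<^sup>2) ^ j * q_binomial (x\<^sup>2) n j) * z ^ j)"
    by (simp add: q_binomial_Suc algebra_simps sum.distrib)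
  then show ?case
    unfolding prod shifted unshifted by (simp add: algebra_simps)
qed simp

definition triple_product_sum :: "'a::comm_ring_1 \<Rightarrow> nat \<Rightarrow> nat \<Rightarrow> 'a" where
  "triple_product_sum x m n =
     (\<Sum>j\<le>m + n. (-1) ^ (j + m) * x ^ nat ((int j - int m)\<^sup>2) * q_binomial (x\<^sup>2) (m + n) j)"

lemma triple_product_sum_0: "triple_product_sum x 0 n = odd_q_pochhammer x n"
proof -
  have "odd_q_pochhammer x n = (\<Prod>i<n. 1 + (-x) * x ^ (2 * i))"
    unfolding odd_q_pochhammer_def by (simp add: power_add mult.commute)
  also have "\<dots> = (\<Sum>j\<le>n. x ^ (j * (j - 1)) * q_binomial (x\<^sup>2) n j * (-x) ^ j)"
    by (rule q_binomial_theorem)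
  also have "\<dots> = triple_product_sum x 0 n"
    unfolding triple_product_sum_def add_0 add_0_right
  proof (intro sum.cong refl)
    fix j :: nat
    have "nat ((int j - int 0)\<^sup>2) = j\<^sup>2"
      by (simp flip: of_nat_power)
    also have "\<dots> = j * (j - 1) + j"
      by (cases j) (simp_all add: power2_eq_square)
    finally have "x ^ nat ((int j - int 0)\<^sup>2) = x ^ (j * (j - 1)) * x ^ j"
      by (simp only: power_add)
    then show "x ^ (j * (j - 1)) * q_binomial (x\<^sup>2) n j * (-x) ^ j
        = (-1) ^ j * x ^ nat ((int j - int 0)\<^sup>2) * q_binomial (x\<^sup>2) n j"
      unfolding power_minus[of x j] by (simp only: mult_ac)
  qed
  finally show ?thesis ..
qed

lemma triple_product_sum_Suc:
  "triple_product_sum x (Suc m) n = (1 - x ^ (2 * m + 1)) * triple_product_sum x m n"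
proof -
  let ?s = "\<lambda>j. (-1) ^ (j + Suc m) * x ^ nat ((int j - int (Suc m))\<^sup>2)"
  let ?Q = "q_binomial (x\<^sup>2) (m + n)"
  have "triple_product_sum x (Suc m) n
      = (\<Sum>j\<le>Suc (m + n). ?s j * (if j = 0 then 0 else ?Q (j - 1)))
      + (\<Sum>j\<le>Suc (m + n). ?s j * ((x\<^sup>2) ^ j * ?Q j))"
    unfolding triple_product_sum_def by (simp only: add_Suc q_binomial_Suc distrib_left sum.distrib)
  also have "(\<Sum>j\<le>Suc (m + n). ?s j * (if j = 0 then 0 else ?Q (j - 1))) = triple_product_sum x m n"
    by (subst sum.atMost_Suc_shift) (simp add: triple_product_sum_def)
  also have "(\<Sum>j\<le>Suc (m + n). ?s j * ((x\<^sup>2) ^ j * ?Q j)) = (\<Sum>j\<le>m + n. ?s j * ((x\<^sup>2) ^ j * ?Q j))"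
    by (simp add: q_binomial_eq_0)
  also have "\<dots> = - (x ^ (2 * m + 1)) * triple_product_sum x m n"
    unfolding triple_product_sum_def sum_distrib_left
  proof (intro sum.cong refl)
    fix j :: nat
    have "(int j - int (Suc m))\<^sup>2 + 2 * int j = (int j - int m)\<^sup>2 + (2 * int m + 1)"
      by (simp add: power2_eq_square algebra_simps)
    then have "int (nat ((int j - int (Suc m))\<^sup>2) + 2 * j) = int (nat ((int j - int m)\<^sup>2) + (2 * m + 1))"
      by simp
    then have "nat ((int j - int (Suc m))\<^sup>2) + 2 * j = nat ((int j - int m)\<^sup>2) + (2 * m + 1)"
      by (simp only: of_nat_eq_iff)
    then have "x ^ nat ((int j - int (Suc m))\<^sup>2) * (x\<^sup>2) ^ j = x ^ nat ((int j - int m)\<^sup>2) * x ^ (2 * m + 1)"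
      by (metis power_add power_mult)
    then have "?s j * ((x\<^sup>2) ^ j * ?Q j)
        = (-1) ^ (j + Suc m) * (x ^ nat ((int j - int m)\<^sup>2) * x ^ (2 * m + 1)) * ?Q j"
      by (metis mult.assoc)
    then show "?s j * ((x\<^sup>2) ^ j * ?Q j)
        = - (x ^ (2 * m + 1)) * ((-1) ^ (j + m) * x ^ nat ((int j - int m)\<^sup>2) * ?Q j)"
      by (simp add: mult_ac)
  qed
  finally show ?thesis by (simp add: algebra_simps)
qed

theorem odd_q_pochhammer_mult:
  "odd_q_pochhammer x m * odd_q_pochhammer x n = triple_product_sum x m n"
  by (induction m) (simp_all add: triple_product_sum_0 triple_product_sum_Suc odd_q_pochhammer_def algebra_simps)

lemma q_pochhammer_double_square:
  "q_pochhammer x (2 * n) ^ 2 = triple_product_sum x n n * q_pochhammer (x\<^sup>2) n ^ 2"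
  by (simp add: power_mult_distrib power2_eq_square[of "odd_q_pochhammer x n"]
      flip: odd_q_pochhammer_mult_q_pochhammer odd_q_pochhammer_mult)

definition fps_cong :: "nat \<Rightarrow> 'a::comm_ring_1 fps \<Rightarrow> 'a fps \<Rightarrow> bool" where
  "fps_cong N f g \<longleftrightarrow> fps_X ^ N dvd f - g"

lemma fps_X_power_dvd_iff: "fps_X ^ N dvd (f :: 'a::comm_ring_1 fps) \<longleftrightarrow> (\<forall>i<N. f $ i = 0)"
proof
  assume "\<forall>i<N. f $ i = 0"
  then have "f = fps_X ^ N * fps_shift N f"
    by (intro fps_ext) (simp add: fps_X_power_mult_nth)
  then show "fps_X ^ N dvd f"
    by (metis dvd_triv_left)
qed (auto simp: fps_X_power_mult_nth)

lemma fps_cong_iff_nth: "fps_cong N f g \<longleftrightarrow> (\<forall>i<N. f $ i = g $ i)"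
  by (simp add: fps_cong_def fps_X_power_dvd_iff)

lemma fps_cong_refl [simp]: "fps_cong N f f"
  by (simp add: fps_cong_iff_nth)

lemma fps_cong_sym: "fps_cong N f g \<Longrightarrow> fps_cong N g f"
  by (simp add: fps_cong_iff_nth)

lemma fps_cong_trans [trans]: "fps_cong N f g \<Longrightarrow> fps_cong N g h \<Longrightarrow> fps_cong N f h"
  by (simp add: fps_cong_iff_nth)

lemma fps_cong_mult: "fps_cong N f g \<Longrightarrow> fps_cong N f' g' \<Longrightarrow> fps_cong N (f * f') (g * g')"
  unfolding fps_cong_def
  by (metis (no_types, lifting) dvd_add dvd_mult dvd_mult2 mult_diff_mult)

lemma fps_cong_sum:
  "(\<And>j. j \<in> A \<Longrightarrow> fps_cong N (f j) (g j)) \<Longrightarrow> fps_cong N (\<Sum>j\<in>A. f j) (\<Sum>j\<in>A. g j)"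
  unfolding fps_cong_def by (simp add: dvd_sum flip: sum_subtractf)

lemma fps_cong_X_power_mult: "N \<le> e \<Longrightarrow> fps_cong N (fps_X ^ e * f) (fps_X ^ e * g)"
  unfolding fps_cong_def by (metis le_imp_power_dvd dvd_mult2 right_diff_distrib)

lemma fps_cong_1_minus_X_power: "N \<le> e \<Longrightarrow> fps_cong N (1 - fps_X ^ e) 1"
  unfolding fps_cong_def by (simp add: le_imp_power_dvd)

lemma fps_eqI_cong: "(\<And>d. fps_cong (Suc d) f g) \<Longrightarrow> f = g"
  by (meson fps_cong_iff_nth fps_ext lessI)

lemma q_pochhammer_fps_X_power_cong:
  assumes "k \<ge> 1" "d \<le> n"
  shows "fps_cong (Suc d) (q_pochhammer (fps_X ^ k :: 'a::comm_ring_1 fps) n) (q_pochhammer (fps_X ^ k) d)"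
  using assms(2)
proof (induction n rule: dec_induct)
  case (step n)
  have "Suc d \<le> k * Suc n"
    using step.hyps assms(1) by (metis Suc_le_mono le_trans mult_le_mono1 mult_1)
  then have "fps_cong (Suc d) (1 - (fps_X ^ k) ^ Suc n) (1 :: 'a fps)"
    unfolding power_mult[symmetric] by (rule fps_cong_1_minus_X_power)
  from fps_cong_mult[OF step.IH this] show ?case
    by (simp add: q_pochhammer_Suc)
qed simp

lemma euler_fps_cong:
  assumes "k \<ge> 1" "d \<le> n"
  shows "fps_cong (Suc d) (euler_fps k) (q_pochhammer (fps_X ^ k) n)"
  unfolding fps_cong_iff_nth
proof (intro allI impI)
  fix i assume "i < Suc d"
  have "euler_fps k $ i = q_pochhammer (fps_X ^ k) i $ i"
    by (simp add: euler_fps_def q_pochhammer_def power_mult)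
  also have "\<dots> = q_pochhammer (fps_X ^ k) n $ i"
  proof -
    have "i \<le> n" using \<open>i < Suc d\<close> assms(2) by simp
    with q_pochhammer_fps_X_power_cong[OF assms(1)]
    have "fps_cong (Suc i) (q_pochhammer (fps_X ^ k) n) (q_pochhammer (fps_X ^ k) i)" .
    then show ?thesis
      unfolding fps_cong_iff_nth by (metis lessI)
  qed
  finally show "euler_fps k $ i = q_pochhammer (fps_X ^ k) n $ i" .
qed

lemma sum_atMost_double_reflect:
  fixes g :: "nat \<Rightarrow> 'a::comm_semiring_1"
  shows "(\<Sum>j\<le>2 * n. g (nat \<bar>int j - int n\<bar>)) = g 0 + 2 * (\<Sum>s=1..n. g s)"
proof -
  have split: "{..2 * n} = {..<n} \<union> {n..n + n}" by auto
  have low: "(\<Sum>j<n. g (nat \<bar>int j - int n\<bar>)) = (\<Sum>s=1..n. g s)"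
    by (rule sum.reindex_bij_witness[of _ "\<lambda>s. n - s" "\<lambda>j. n - j"]) (auto simp: nat_diff_distrib')
  have high: "(\<Sum>j=n..n + n. g (nat \<bar>int j - int n\<bar>)) = (\<Sum>s\<le>n. g s)"
    by (rule sum.reindex_bij_witness[of _ "\<lambda>s. s + n" "\<lambda>j. j - n"]) (auto simp: nat_diff_distrib')
  have "(\<Sum>j\<le>2 * n. g (nat \<bar>int j - int n\<bar>))
      = (\<Sum>j<n. g (nat \<bar>int j - int n\<bar>)) + (\<Sum>j=n..n + n. g (nat \<bar>int j - int n\<bar>))"
    unfolding split by (rule sum.union_disjoint) auto
  also have "\<dots> = (\<Sum>s=1..n. g s) + (\<Sum>s\<le>n. g s)"
    by (simp only: low high)
  also have "(\<Sum>s\<le>n. g s) = g 0 + (\<Sum>s=1..n. g s)"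
    by (simp add: atMost_atLeast0 sum.atLeast_Suc_atMost)
  finally show ?thesis
    by (simp add: mult_2 add_ac)
qed

definition theta_tail :: "nat \<Rightarrow> int fps" where
  "theta_tail k = Abs_fps (\<lambda>t. \<Sum>s | 0 < s \<and> k * s\<^sup>2 = t. (-1) ^ s)"

lemma theta_polynomial_nth:
  assumes "k \<ge> 1" "t \<le> n"
  shows "(\<Sum>j\<le>2 * n. (-1) ^ (j + n) * (fps_X ^ k) ^ nat ((int j - int n)\<^sup>2) :: int fps) $ t
       = (1 + 2 * theta_tail k) $ t"
proof -
  define g :: "nat \<Rightarrow> int fps" where "g s = fps_const ((-1) ^ s) * fps_X ^ (k * s\<^sup>2)" for s
  have "(-1) ^ (j + n) * (fps_X ^ k) ^ nat ((int j - int n)\<^sup>2) = g (nat \<bar>int j - int n\<bar>)" for j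
  proof -
    have "even (j + n) \<longleftrightarrow> even (nat \<bar>int j - int n\<bar>)"
      by (cases "j \<le> n") (auto simp: nat_diff_distrib')
    moreover have "nat ((int j - int n)\<^sup>2) = (nat \<bar>int j - int n\<bar>)\<^sup>2"
      by (simp add: nat_power_eq[symmetric])
    ultimately show ?thesis
      by (simp add: g_def minus_one_power_iff power_mult flip: fps_const_neg)
  qed
  then have "(\<Sum>j\<le>2 * n. (-1) ^ (j + n) * (fps_X ^ k) ^ nat ((int j - int n)\<^sup>2)) = g 0 + 2 * (\<Sum>s=1..n. g s)"
    by (simp add: sum_atMost_double_reflect)
  moreover have "(\<Sum>s=1..n. g s) $ t = theta_tail k $ t"
  proof -
    have "s \<le> k * s\<^sup>2" if "0 < s" for s
      using that assms(1) by (metis dual_order.trans le_square mult_le_mono1 mult_1 power2_eq_square)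
    then have support: "{s \<in> {1..n}. k * s\<^sup>2 = t} = {s. 0 < s \<and> k * s\<^sup>2 = t}"
      using le_trans[OF _ assms(2)] by auto
    have "(\<Sum>s=1..n. g s) $ t = (\<Sum>s\<in>{1..n}. if k * s\<^sup>2 = t then (-1) ^ s else 0)"
      by (auto simp: g_def fps_sum_nth intro!: sum.cong)
    also have "\<dots> = (\<Sum>s\<in>{s \<in> {1..n}. k * s\<^sup>2 = t}. (-1) ^ s)"
      by (rule sum.inter_filter[symmetric]) simp
    also have "\<dots> = theta_tail k $ t"
      unfolding support by (simp add: theta_tail_def)
    finally show ?thesis .
  qed
  ultimately show ?thesis
    by (simp add: g_def numeral_fps_const)
qed

lemma q_binomial_fps_X_power_cong:
  assumes "k \<ge> 1" "j \<le> N" "d \<le> j" "d \<le> N - j" "d \<le> n"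
  shows "fps_cong (Suc d) (q_binomial (fps_X ^ k) N j * q_pochhammer (fps_X ^ k) n ^ 2)
           (q_pochhammer (fps_X ^ k) n :: 'a::comm_ring_1 fps)"
proof -
  let ?q = "q_pochhammer (fps_X ^ k) :: nat \<Rightarrow> 'a fps"
  have cong: "fps_cong (Suc d) (?q a) (?q b)" if "d \<le> a" "d \<le> b" for a b
    using q_pochhammer_fps_X_power_cong[OF assms(1) that(1)] q_pochhammer_fps_X_power_cong[OF assms(1) that(2)]
    by (meson fps_cong_sym fps_cong_trans)
  have "fps_cong (Suc d) (q_binomial (fps_X ^ k) N j * ?q n ^ 2) (q_binomial (fps_X ^ k) N j * ?q j * ?q (N - j))"
    unfolding power2_eq_square mult.assoc[symmetric] using assms by (intro fps_cong_mult fps_cong_refl cong)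
  also have "q_binomial (fps_X ^ k) N j * ?q j * ?q (N - j) = ?q N"
    using assms(2) by (rule q_binomial_mult_q_pochhammer)
  also have "fps_cong (Suc d) (?q N) (?q n)"
    using assms by (intro cong) auto
  finally show ?thesis .
qed

text \<open>Either j lies within d of the centre n, and then the Gaussian factor is 1 up to order d,
  or the monomial in front of it already vanishes up to order d.\<close>
lemma triple_product_term_cong:
  assumes "k \<ge> 1" "2 * d \<le> n" "j \<le> 2 * n"
  defines "Q \<equiv> fps_X ^ (2 * k) :: 'a::comm_ring_1 fps"
  shows "fps_cong (Suc d)
           ((fps_X ^ k) ^ nat ((int j - int n)\<^sup>2) * (q_binomial Q (2 * n) j * q_pochhammer Q n ^ 2))
           ((fps_X ^ k) ^ nat ((int j - int n)\<^sup>2) * q_pochhammer Q n)"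
proof (cases "k * nat ((int j - int n)\<^sup>2) \<le> d")
  case True
  define s where "s = nat \<bar>int j - int n\<bar>"
  have "nat ((int j - int n)\<^sup>2) = s\<^sup>2"
    by (simp add: s_def nat_power_eq[symmetric])
  then have "s \<le> d"
    using True assms(1) le_square[of s] by (metis power2_eq_square le_trans mult_le_mono1 mult_1)
  then have "d \<le> j" "d \<le> 2 * n - j" "d \<le> n"
    using assms(2,3) by (auto simp: s_def)
  then have "fps_cong (Suc d) (q_binomial Q (2 * n) j * q_pochhammer Q n ^ 2) (q_pochhammer Q n)"
    unfolding Q_def using assms(1,3) by (intro q_binomial_fps_X_power_cong) simp_all
  then show ?thesis
    by (intro fps_cong_mult fps_cong_refl)
next
  case False
  then show ?thesis
    unfolding power_mult[symmetric] by (intro fps_cong_X_power_mult) simp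
qed

lemma euler_fps_square_cong:
  assumes "k \<ge> 1"
  shows "fps_cong (Suc d) (euler_fps k ^ 2) (euler_fps (2 * k) * (1 + 2 * theta_tail k))"
proof -
  define n where "n = 2 * d"
  define x :: "int fps" where "x = fps_X ^ k"
  have x2: "x\<^sup>2 = fps_X ^ (2 * k)"
    unfolding x_def by (simp flip: power_mult add: mult.commute)
  let ?qQ = "q_pochhammer (x\<^sup>2) n"
  let ?theta = "\<Sum>j\<le>2 * n. (-1) ^ (j + n) * x ^ nat ((int j - int n)\<^sup>2)"
  have "fps_cong (Suc d) (euler_fps k ^ 2) (q_pochhammer x (2 * n) ^ 2)"
    unfolding x_def power2_eq_square by (intro fps_cong_mult euler_fps_cong assms) (simp_all add: n_def)
  also have "q_pochhammer x (2 * n) ^ 2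
      = (\<Sum>j\<le>2 * n. (-1) ^ (j + n) * (x ^ nat ((int j - int n)\<^sup>2) * (q_binomial (x\<^sup>2) (2 * n) j * ?qQ ^ 2)))"
    unfolding q_pochhammer_double_square triple_product_sum_def
    by (simp add: sum_distrib_right mult_2 mult.assoc)
  also have "fps_cong (Suc d) \<dots> (\<Sum>j\<le>2 * n. (-1) ^ (j + n) * (x ^ nat ((int j - int n)\<^sup>2) * ?qQ))"
    unfolding x2 unfolding x_def using assms
    by (intro fps_cong_sum fps_cong_mult[OF fps_cong_refl] triple_product_term_cong) (simp_all add: n_def)
  also have "(\<Sum>j\<le>2 * n. (-1) ^ (j + n) * (x ^ nat ((int j - int n)\<^sup>2) * ?qQ)) = ?theta * ?qQ"
    by (simp add: sum_distrib_right mult.assoc)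
  also have "fps_cong (Suc d) \<dots> ((1 + 2 * theta_tail k) * euler_fps (2 * k))"
  proof (intro fps_cong_mult)
    have "\<forall>t<Suc d. ?theta $ t = (1 + 2 * theta_tail k) $ t"
    proof (intro allI impI)
      fix t assume "t < Suc d"
      then have "t \<le> n"
        by (simp add: n_def)
      then show "?theta $ t = (1 + 2 * theta_tail k) $ t"
        unfolding x_def by (rule theta_polynomial_nth[OF assms])
    qed
    then show "fps_cong (Suc d) ?theta (1 + 2 * theta_tail k)"
      by (simp only: fps_cong_iff_nth)
    show "fps_cong (Suc d) ?qQ (euler_fps (2 * k))"
      unfolding x2 by (rule fps_cong_sym, rule euler_fps_cong) (use assms in \<open>auto simp: n_def\<close>)
  qed
  finally show ?thesis
    by (simp only: mult.commute)
qed

theorem euler_fps_square: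
  "k \<ge> 1 \<Longrightarrow> euler_fps k ^ 2 = euler_fps (2 * k) * (1 + 2 * theta_tail k)"
  by (intro fps_eqI_cong euler_fps_square_cong)

lemma power_mod_8_expansion:
  fixes b :: "'a::comm_ring_1"
  shows "8 dvd (1 - 2 * b + 4 * b\<^sup>2) ^ m - (1 - 2 * of_nat m * b + 4 * of_nat (Suc m choose 2) * b\<^sup>2)"
proof (induction m)
  case (Suc m)
  let ?h = "1 - 2 * b + 4 * b\<^sup>2"
  let ?c = "of_nat (Suc m choose 2) :: 'a"
  have "Suc (Suc m) choose 2 = (Suc m choose 2) + Suc m"
    by (simp add: numeral_2_eq_2)
  then have step: "?h * (1 - 2 * of_nat m * b + 4 * ?c * b\<^sup>2)
      - (1 - 2 * of_nat (Suc m) * b + 4 * of_nat (Suc (Suc m) choose 2) * b\<^sup>2)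
      = 8 * (2 * ?c * b ^ 4 - (?c + of_nat m) * b ^ 3)"
    by (simp add: algebra_simps power2_eq_square power3_eq_cube power4_eq_xxxx)
  have decomp: "?h ^ Suc m - (1 - 2 * of_nat (Suc m) * b + 4 * of_nat (Suc (Suc m) choose 2) * b\<^sup>2)
      = ?h * (?h ^ m - (1 - 2 * of_nat m * b + 4 * ?c * b\<^sup>2)) + 8 * (2 * ?c * b ^ 4 - (?c + of_nat m) * b ^ 3)"
    unfolding step[symmetric] by (simp add: algebra_simps)
  show ?case
    unfolding decomp by (intro dvd_add dvd_mult Suc.IH dvd_triv_left)
qed (simp add: binomial_eq_0)

lemma inverse_mod_8_expansion:
  fixes g a b :: "'a::comm_ring_1"
  assumes "g * ((1 + 2 * a) * (1 + 2 * b) ^ m) = 1"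
  shows "8 dvd g - (1 - 2 * a - 2 * of_nat m * b
                    + 4 * (a\<^sup>2 + of_nat m * a * b + of_nat (Suc m choose 2) * b\<^sup>2))"
    (is "8 dvd g - ?T")
proof -
  define h where "h y = 1 - 2 * y + 4 * y\<^sup>2" for y :: 'a
  define P where "P = 1 - 2 * of_nat m * b + 4 * of_nat (Suc m choose 2) * b\<^sup>2"
  define H where "H = h a * h b ^ m"
  define U where "U = (1 + 2 * a) * (1 + 2 * b) ^ m"
  define Q where "Q = (1 + 8 * b ^ 3) ^ m"
  have "H * U = (1 + 8 * a ^ 3) * Q"
    by (simp add: H_def U_def Q_def h_def power_mult_distrib[symmetric] algebra_simps
        power2_eq_square power3_eq_cube)
  then have "1 - H * U = - (Q - 1) - 8 * (a ^ 3 * Q)"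
    by (simp add: algebra_simps)
  moreover have "8 dvd Q - 1"
    by (simp add: Q_def power_diff_1_eq)
  ultimately have "8 dvd 1 - H * U"
    by (metis dvd_diff dvd_minus_iff dvd_triv_left)
  moreover have "g - H = g * (1 - H * U)"
    using assms by (simp add: U_def right_diff_distrib mult.left_commute)
  ultimately have g_H: "8 dvd g - H"
    by simp
  have H_P: "8 dvd H - h a * P"
    unfolding H_def P_def h_def right_diff_distrib[symmetric] by (intro dvd_mult power_mod_8_expansion)
  have P_T: "h a * P - ?T
      = 8 * (2 * of_nat (Suc m choose 2) * a\<^sup>2 * b\<^sup>2 - of_nat (Suc m choose 2) * a * b\<^sup>2 - of_nat m * a\<^sup>2 * b)"
    by (simp add: h_def P_def algebra_simps power2_eq_square)
  have "g - ?T = (g - H) + (H - h a * P) + (h a * P - ?T)"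
    by simp
  then show ?thesis
    unfolding P_T by (metis g_H H_P dvd_add dvd_triv_left)
qed

lemma euler_fps_nth_0: "euler_fps k $ 0 = 1"
  by (simp add: euler_fps_def)

lemma overcubic_gf_even_mult:
  assumes "i \<ge> 1"
  shows "overcubic_gf (2 * i) * ((1 + 2 * theta_tail 1) * (1 + 2 * theta_tail 2) ^ (2 * i - 1)) = 1"
proof -
  define m where "m = 2 * i - 1"
  define D where "D = euler_fps 1 ^ 2 * euler_fps 2 ^ (2 * (2 * i) - 3)"
  let ?U = "(1 + 2 * theta_tail 1) * (1 + 2 * theta_tail 2) ^ m"
  have f1: "euler_fps 1 ^ 2 = euler_fps 2 * (1 + 2 * theta_tail 1)"
    using euler_fps_square[of 1] by simp
  have f2: "euler_fps 2 ^ 2 = euler_fps 4 * (1 + 2 * theta_tail 2)"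
    using euler_fps_square[of 2] by simp
  have "2 * (2 * i) - 3 = 2 * m - 1" "Suc (2 * m - 1) = 2 * m"
    using assms by (simp_all add: m_def)
  then have "euler_fps 2 * euler_fps 2 ^ (2 * (2 * i) - 3) = (euler_fps 2 ^ 2) ^ m"
    by (metis power_Suc power_mult)
  then have "D = (1 + 2 * theta_tail 1) * (euler_fps 2 ^ 2) ^ m"
    unfolding D_def f1 by (simp add: mult_ac)
  also have "\<dots> = euler_fps 4 ^ m * ?U"
    unfolding f2 by (simp add: power_mult_distrib mult_ac)
  finally have D: "D = euler_fps 4 ^ m * ?U" .
  have "D * fps_right_inverse D 1 = 1"
    by (rule fps_right_inverse) (simp add: D_def euler_fps_nth_0 fps_nth_power_0)
  moreover have "overcubic_gf (2 * i) = euler_fps 4 ^ m * fps_right_inverse D 1"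
    using assms by (simp add: overcubic_gf_def m_def D_def)
  ultimately show ?thesis
    unfolding D m_def[symmetric] by (simp add: mult_ac)
qed

lemma abar_even_cong_mod_8:
  fixes i t :: nat
  defines "A \<equiv> theta_tail 1" and "B \<equiv> theta_tail 2" and "m \<equiv> 2 * i - 1"
  assumes "i \<ge> 1" "t > 0"
  shows "[abar (2 * i) t = 4 * (A\<^sup>2 + of_nat m * A * B + of_nat (Suc m choose 2) * B\<^sup>2) $ t
                           - 2 * A $ t - 2 * int m * B $ t] (mod 8)"
proof -
  define W where "W = A\<^sup>2 + of_nat m * A * B + of_nat (Suc m choose 2) * B\<^sup>2"
  have "8 dvd overcubic_gf (2 * i) - (1 - 2 * A - 2 * of_nat m * B + 4 * W)"
    using overcubic_gf_even_mult[OF assms(4)] unfolding A_def B_def m_def W_def by (rule inverse_mod_8_expansion)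
  then obtain M where "overcubic_gf (2 * i) = 1 - 2 * A - 2 * of_nat m * B + 4 * W + 8 * M"
    by (metis dvdE diff_add_cancel add.commute)
  then have "abar (2 * i) t = 4 * W $ t - 2 * A $ t - 2 * int m * B $ t + 8 * M $ t"
    using assms(5) by (simp add: abar_def numeral_fps_const flip: fps_of_nat)
  then have "[abar (2 * i) t = 4 * W $ t - 2 * A $ t - 2 * int m * B $ t] (mod 8)"
    by (simp add: cong_iff_dvd_diff)
  then show ?thesis
    by (simp only: W_def)
qed

lemma theta_tail_nth_eq_0:
  assumes "\<And>s. t \<noteq> k * s\<^sup>2"
  shows "theta_tail k $ t = 0"
proof -
  have no_roots: "{s. 0 < s \<and> k * s\<^sup>2 = t} = {}"
    using assms by auto
  show ?thesis
    by (simp add: theta_tail_def no_roots)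
qed

lemma square_mod_8: "(s::nat)\<^sup>2 mod 8 \<in> {0, 1, 4}"
proof -
  have "s mod 8 \<in> {0, 1, 2, 3, 4, 5, 6, 7}"
    by auto
  moreover have "s\<^sup>2 mod 8 = (s mod 8)\<^sup>2 mod 8"
    by (simp add: power_mod)
  ultimately show ?thesis
    by (auto simp: power2_eq_square)
qed

lemma theta_tail_1_nth_eq_0: "t mod 8 \<notin> {0, 1, 4} \<Longrightarrow> theta_tail 1 $ t = 0"
  using square_mod_8 by (intro theta_tail_nth_eq_0) (metis mult_1)

lemma theta_tail_2_nth_eq_0: "t mod 8 \<notin> {0, 2} \<Longrightarrow> theta_tail 2 $ t = 0"
proof (intro theta_tail_nth_eq_0 notI)
  fix s assume "t mod 8 \<notin> {0, 2}" "t = 2 * s\<^sup>2"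
  moreover have "2 * s\<^sup>2 mod 8 = 2 * (s\<^sup>2 mod 8) mod 8"
    by (simp add: mod_mult_right_eq)
  ultimately show False
    using square_mod_8[of s] by auto
qed

lemma fps_mult_nth_eq_0_mod:
  fixes f g :: "'a::semiring_0 fps"
  assumes "\<And>i. i mod p \<notin> R \<Longrightarrow> f $ i = 0" and "\<And>i. i mod p \<notin> S \<Longrightarrow> g $ i = 0"
    and "\<And>r s. r \<in> R \<Longrightarrow> s \<in> S \<Longrightarrow> (r + s) mod p \<noteq> t mod p"
  shows "(f * g) $ t = 0"
  unfolding fps_mult_nth
proof (intro sum.neutral ballI)
  fix i assume "i \<in> {0..t}"
  then have "(i mod p + (t - i) mod p) mod p = t mod p"
    by (simp add: mod_add_eq)
  then show "f $ i * g $ (t - i) = 0"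
    using assms by (cases "i mod p \<in> R \<and> (t - i) mod p \<in> S") auto
qed

lemma abar_even_cong_0_mod_4:
  assumes "i \<ge> 1" "t mod 8 \<in> {3, 5, 6, 7}"
  shows "[abar (2 * i) t = 0] (mod 4)"
proof -
  have "t > 0"
    using assms(2) by (auto intro: gr0I)
  moreover have "theta_tail 1 $ t = 0" "theta_tail 2 $ t = 0"
    using assms(2) theta_tail_1_nth_eq_0[of t] theta_tail_2_nth_eq_0[of t] by auto
  ultimately obtain w where "[abar (2 * i) t = 4 * w] (mod 8)"
    using abar_even_cong_mod_8[OF assms(1)] by (metis diff_zero mult_zero_right)
  then show ?thesis
    unfolding cong_iff_dvd_diff cong_0_iff by presburger
qed

lemma abar_even_cong_0_mod_8:
  assumes "i \<ge> 1" "t mod 8 = 7"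
  shows "[abar (2 * i) t = 0] (mod 8)"
proof -
  define A where "A = theta_tail 1"
  define B where "B = theta_tail 2"
  have A: "A $ j = 0" if "j mod 8 \<notin> {0, 1, 4}" for j
    using that theta_tail_1_nth_eq_0 by (simp add: A_def)
  have B: "B $ j = 0" if "j mod 8 \<notin> {0, 2}" for j
    using that theta_tail_2_nth_eq_0 by (simp add: B_def)
  have "(A * A) $ t = 0"
    by (rule fps_mult_nth_eq_0_mod[where p = 8 and R = "{0, 1, 4}" and S = "{0, 1, 4}"], erule A, erule A)
       (use assms(2) in auto)
  moreover have "(A * B) $ t = 0"
    by (rule fps_mult_nth_eq_0_mod[where p = 8 and R = "{0, 1, 4}" and S = "{0, 2}"], erule A, erule B)
       (use assms(2) in auto)
  moreover have "(B * B) $ t = 0"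
    by (rule fps_mult_nth_eq_0_mod[where p = 8 and R = "{0, 2}" and S = "{0, 2}"], erule B, erule B)
       (use assms(2) in auto)
  moreover have "A $ t = 0" "B $ t = 0"
    by (rule A B, simp add: assms(2))+
  moreover have "t > 0"
    using assms(2) by (auto intro: gr0I)
  note abar_even_cong_mod_8[OF assms(1) this, folded A_def B_def]
  ultimately show ?thesis
    by (simp add: power2_eq_square mult.assoc flip: fps_of_nat)
qed

theorem theorem1p5:
  fixes n i :: nat
  assumes "i \<ge> 1"
  shows "[abar (2 * i) (4 * n + 3) = 0] (mod 4) \<and>
         [abar (2 * i) (8 * n + 6) = 0] (mod 4) \<and>
         [abar (2 * i) (8 * n + 5) = 0] (mod 4) \<and>
         [abar (2 * i) (8 * n + 7) = 0] (mod 8)"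
proof -
  have "(4 * n + 3) mod 8 \<in> {3, 7}"
    by (cases "even n") (auto elim!: evenE oddE)
  then show ?thesis
    using abar_even_cong_0_mod_4[OF assms] abar_even_cong_0_mod_8[OF assms] by auto
qed

end
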